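(* Let $\gamma>0$, $s_0=2$, $s\geq s_0$, and let $u$ be a sufficiently regular function supported in $\mathcal{K}=\{(t,x):|x|\leq t-1\}$ solving the wave equation $-\Box u=f$ on $\mathcal{K}_{[s_0,s]}$. Then \[ \int_{\mathcal{H}_s}(t-r)^{-\gamma}(s/t)^2|\partial u|^2\,dx\leq 2E(s_0,u)+4\int_{s_0}^s\int_{\mathcal{H}_{s'}}(s'/t)(t-r)^{-\gamma} f\,\partial_t u\,dx\,ds'. \]
   Context: Signature $(-,+,+)$, $\Box=-\partial_t^2+\partial_1^2+\partial_2^2$, $r=|x|$. $\mathcal{H}_s=\{(t,x):t^2=|x|^2+s^2\}$ and $\mathcal{K}_{[s_0,s]}=\{(t,x): s_0^2\leq t^2-r^2\leq s^2,\ r\leq t-1\}$. For a function $\phi$, $\int_{\mathcal{H}_s}\phi\,dx:=\int_{\mathbb{R}^2}\phi(\sqrt{s^2+|x|^2},x)\,dx$ (so in the integrand, $t=\sqrt{s^2+|x|^2}$, resp. $t=\sqrt{s'^2+|x|^2}$). $|\partial u|^2=\sum_{\alpha=0}^2(\partial_\alpha u)^2$. The energy is $E(s,u)=\int_{\mathcal{H}_s}\big((\partial_t u)^2+\sum_a(\partial_a u)^2+2(x^a/t)\partial_a u\,\partial_t u\big)dx$. *)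

theory Defs
  imports "HOL-Analysis.Analysis"
begin

text \<open>Points of spacetime are written (t, x) with t :: real and x :: real \<times> real.
  Index 0 is time, indices 1, 2 are the spatial coordinates.\<close>

definition coord :: "nat \<Rightarrow> real \<Rightarrow> real \<times> real \<Rightarrow> real" where
  "coord i t x = (if i = 0 then t else if i = 1 then fst x else snd x)"

definition line :: "nat \<Rightarrow> (real \<Rightarrow> real \<times> real \<Rightarrow> real) \<Rightarrow> real \<Rightarrow> real \<times> real \<Rightarrow> real \<Rightarrow> real" where
  "line i u t x = (\<lambda>y. if i = 0 then u y x else if i = 1 then u t (y, snd x) else u t (fst x, y))"

definition pd :: "nat \<Rightarrow> (real \<Rightarrow> real \<times> real \<Rightarrow> real) \<Rightarrow> real \<Rightarrow> real \<times> real \<Rightarrow> real" where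
  "pd i u t x = deriv (line i u t x) (coord i t x)"

definition C1_reg :: "(real \<Rightarrow> real \<times> real \<Rightarrow> real) \<Rightarrow> bool" where
  "C1_reg u \<longleftrightarrow> continuous_on UNIV (\<lambda>p. u (fst p) (snd p))
     \<and> (\<forall>i<3. \<forall>t x. line i u t x differentiable (at (coord i t x)))
     \<and> (\<forall>i<3. continuous_on UNIV (\<lambda>p. pd i u (fst p) (snd p)))"

definition C2_reg :: "(real \<Rightarrow> real \<times> real \<Rightarrow> real) \<Rightarrow> bool" where
  "C2_reg u \<longleftrightarrow> C1_reg u \<and> (\<forall>i<3. C1_reg (pd i u))"

definition wave_box :: "(real \<Rightarrow> real \<times> real \<Rightarrow> real) \<Rightarrow> real \<Rightarrow> real \<times> real \<Rightarrow> real" where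
  "wave_box u t x = - pd 0 (pd 0 u) t x + pd 1 (pd 1 u) t x + pd 2 (pd 2 u) t x"

definition grad_sq :: "(real \<Rightarrow> real \<times> real \<Rightarrow> real) \<Rightarrow> real \<Rightarrow> real \<times> real \<Rightarrow> real" where
  "grad_sq u t x = (\<Sum>i<3. (pd i u t x)\<^sup>2)"

definition K_region :: "real \<Rightarrow> real \<Rightarrow> (real \<times> (real \<times> real)) set" where
  "K_region s0 s = {(t, x). s0\<^sup>2 \<le> t\<^sup>2 - (norm x)\<^sup>2 \<and> t\<^sup>2 - (norm x)\<^sup>2 \<le> s\<^sup>2 \<and> norm x \<le> t - 1}"

definition hyp_t :: "real \<Rightarrow> real \<times> real \<Rightarrow> real" where
  "hyp_t s x = sqrt (s\<^sup>2 + (norm x)\<^sup>2)"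

definition energy :: "real \<Rightarrow> (real \<Rightarrow> real \<times> real \<Rightarrow> real) \<Rightarrow> real" where
  "energy s u = (\<integral>x. (let t = hyp_t s x in
      (pd 0 u t x)\<^sup>2 + (pd 1 u t x)\<^sup>2 + (pd 2 u t x)\<^sup>2
      + 2 * ((fst x / t) * pd 1 u t x * pd 0 u t x + (snd x / t) * pd 2 u t x * pd 0 u t x)) \<partial>lborel)"

end

theory Submission
  imports Defs
begin

(* Write U_i = d_i u and W = (t - r) powr (-gamma) on the hyperboloid H_s, parametrised by x, and
   let e = |U|^2 + 2 (x^a / t) U_a U_0 be the hyperboloidal energy density. Differentiating along
   the foliation gives the pointwise identity

     d_s (W e / 2) + sum_a d_a (-(s/t) W U_a U_0)
       = (s/t) W U_0 (-Box u)
         - (gamma/2) (s/t) (t - r) powr (-gamma - 1) sum_a (U_a + (x^a/r) U_0)^2,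

   in which the ghost-weight term is nonpositive. The divergence term integrates to zero over H_s
   because u has compact support on each hyperboloid, so integrating in s from 2 to s bounds the
   weighted energy at s by the weighted energy at 2 plus the source integral. Finally
   (s/t)^2 |du|^2 <= 2 e pointwise, and W <= 1 on the support of u, where t - r >= 1. *)

type_synonym spacetime_fn = "real \<Rightarrow> real \<times> real \<Rightarrow> real"


lemma mixed_partials_mean_value:
  fixes H Hx Hy Hxy Hyx :: "real \<Rightarrow> real \<Rightarrow> real"
  assumes dx: "\<And>x y. ((\<lambda>x. H x y) has_real_derivative Hx x y) (at x)"
      and dy: "\<And>x y. ((\<lambda>y. H x y) has_real_derivative Hy x y) (at y)"
      and dxy: "\<And>x y. ((\<lambda>y. Hx x y) has_real_derivative Hxy x y) (at y)"
      and dyx: "\<And>x y. ((\<lambda>x. Hy x y) has_real_derivative Hyx x y) (at x)"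
      and "h > 0"
  obtains \<xi> \<eta> \<xi>' \<eta>'
  where "\<xi> \<in> {x0<..<x0+h}" "\<eta> \<in> {y0<..<y0+h}" "\<xi>' \<in> {x0<..<x0+h}" "\<eta>' \<in> {y0<..<y0+h}"
    and "Hxy \<xi> \<eta> = Hyx \<xi>' \<eta>'"
proof -
  define D where "D = H (x0+h) (y0+h) - H (x0+h) y0 - H x0 (y0+h) + H x0 y0"
  obtain \<xi> where \<xi>: "x0 < \<xi>" "\<xi> < x0+h" "D = h * (Hx \<xi> (y0+h) - Hx \<xi> y0)"
    using MVT2[of x0 "x0+h" "\<lambda>x. H x (y0+h) - H x y0" "\<lambda>x. Hx x (y0+h) - Hx x y0"] \<open>h > 0\<close>
      DERIV_diff[OF dx dx] unfolding D_def by (auto simp: algebra_simps)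
  obtain \<eta> where \<eta>: "y0 < \<eta>" "\<eta> < y0+h" "Hx \<xi> (y0+h) - Hx \<xi> y0 = h * Hxy \<xi> \<eta>"
    using MVT2[of y0 "y0+h" "Hx \<xi>" "Hxy \<xi>"] \<open>h > 0\<close> dxy by auto
  obtain \<eta>' where \<eta>': "y0 < \<eta>'" "\<eta>' < y0+h" "D = h * (Hy (x0+h) \<eta>' - Hy x0 \<eta>')"
    using MVT2[of y0 "y0+h" "\<lambda>y. H (x0+h) y - H x0 y" "\<lambda>y. Hy (x0+h) y - Hy x0 y"] \<open>h > 0\<close>
      DERIV_diff[OF dy dy] unfolding D_def by (auto simp: algebra_simps)
  obtain \<xi>' where \<xi>': "x0 < \<xi>'" "\<xi>' < x0+h" "Hy (x0+h) \<eta>' - Hy x0 \<eta>' = h * Hyx \<xi>' \<eta>'"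
    using MVT2[of x0 "x0+h" "\<lambda>x. Hy x \<eta>'" "\<lambda>x. Hyx x \<eta>'"] \<open>h > 0\<close> dyx by auto
  have "D = h * (h * Hxy \<xi> \<eta>)" using \<xi>(3) \<eta>(3) by simp
  moreover have "D = h * (h * Hyx \<xi>' \<eta>')" using \<eta>'(3) \<xi>'(3) by simp
  ultimately have "Hxy \<xi> \<eta> = Hyx \<xi>' \<eta>'" using \<open>h > 0\<close> by simp
  with \<xi> \<eta> \<xi>' \<eta>' show ?thesis using that by auto
qed

lemma mixed_partials_eq:
  fixes H Hx Hy Hxy Hyx :: "real \<Rightarrow> real \<Rightarrow> real"
  assumes dx: "\<And>x y. ((\<lambda>x. H x y) has_real_derivative Hx x y) (at x)"
      and dy: "\<And>x y. ((\<lambda>y. H x y) has_real_derivative Hy x y) (at y)"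
      and dxy: "\<And>x y. ((\<lambda>y. Hx x y) has_real_derivative Hxy x y) (at y)"
      and dyx: "\<And>x y. ((\<lambda>x. Hy x y) has_real_derivative Hyx x y) (at x)"
      and cxy: "isCont (\<lambda>p. Hxy (fst p) (snd p)) (x0, y0)"
      and cyx: "isCont (\<lambda>p. Hyx (fst p) (snd p)) (x0, y0)"
  shows "Hxy x0 y0 = Hyx x0 y0"
proof (rule ccontr)
  assume ne: "Hxy x0 y0 \<noteq> Hyx x0 y0"
  define e where "e = \<bar>Hxy x0 y0 - Hyx x0 y0\<bar> / 2"
  have "e > 0" using ne by (simp add: e_def)
  obtain d1 where d1: "d1 > 0" "\<And>p. dist p (x0, y0) < d1 \<Longrightarrow> \<bar>Hxy (fst p) (snd p) - Hxy x0 y0\<bar> < e"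
    using cxy \<open>e > 0\<close> unfolding continuous_at_eps_delta dist_real_def by fastforce
  obtain d2 where d2: "d2 > 0" "\<And>p. dist p (x0, y0) < d2 \<Longrightarrow> \<bar>Hyx (fst p) (snd p) - Hyx x0 y0\<bar> < e"
    using cyx \<open>e > 0\<close> unfolding continuous_at_eps_delta dist_real_def by fastforce
  define h where "h = min d1 d2 / 2"
  have "h > 0" using d1 d2 by (simp add: h_def)
  have near: "dist (a, b) (x0, y0) < min d1 d2" if "a \<in> {x0<..<x0+h}" "b \<in> {y0<..<y0+h}" for a b
  proof -
    have "dist (a, b) (x0, y0) \<le> \<bar>a - x0\<bar> + \<bar>b - y0\<bar>"
      using sqrt_sum_squares_le_sum_abs[of "a - x0" "b - y0"]
      by (simp add: dist_Pair_Pair dist_real_def)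
    also have "\<dots> < 2 * h" using that by auto
    finally show ?thesis by (simp add: h_def)
  qed
  obtain \<xi> \<eta> \<xi>' \<eta>' where pts: "\<xi> \<in> {x0<..<x0+h}" "\<eta> \<in> {y0<..<y0+h}" "\<xi>' \<in> {x0<..<x0+h}"
      "\<eta>' \<in> {y0<..<y0+h}" "Hxy \<xi> \<eta> = Hyx \<xi>' \<eta>'"
    using mixed_partials_mean_value[OF dx dy dxy dyx \<open>h > 0\<close>] by blast
  have "\<bar>Hxy \<xi> \<eta> - Hxy x0 y0\<bar> < e" "\<bar>Hyx \<xi>' \<eta>' - Hyx x0 y0\<bar> < e"
    using d1(2)[of "(\<xi>, \<eta>)"] d2(2)[of "(\<xi>', \<eta>')"] near[OF pts(1,2)] near[OF pts(3,4)] by auto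
  moreover have "\<bar>Hxy x0 y0 - Hyx x0 y0\<bar> \<le> \<bar>Hxy \<xi> \<eta> - Hxy x0 y0\<bar> + \<bar>Hyx \<xi>' \<eta>' - Hyx x0 y0\<bar>"
    using pts(5) abs_triangle_ineq4[of "Hxy \<xi> \<eta> - Hxy x0 y0" "Hyx \<xi>' \<eta>' - Hyx x0 y0"] by simp
  ultimately have "\<bar>Hxy x0 y0 - Hyx x0 y0\<bar> < 2 * e" by linarith
  then show False by (simp add: e_def)
qed

lemma sqrt_add_sq_has_derivative:
  "0 < k + y\<^sup>2 \<Longrightarrow> ((\<lambda>y. sqrt (k + y\<^sup>2)) has_real_derivative y / sqrt (k + y\<^sup>2)) (at y)"
  by (auto intro!: derivative_eq_intros simp: field_simps)

lemma integrable_continuous_compact_support: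
  fixes F :: "'a::euclidean_space \<Rightarrow> real"
  assumes "compact K" "continuous_on K F" "\<And>x. x \<notin> K \<Longrightarrow> F x = 0"
  shows "integrable lborel F"
proof -
  have "F = (\<lambda>x. indicator K x *\<^sub>R F x)"
    using assms(3) by (auto simp: indicator_def fun_eq_iff)
  with borel_integrable_compact[OF assms(1,2)] show ?thesis by simp
qed

lemma integrable_mult_bounded:
  fixes F G :: "'a \<Rightarrow> real"
  assumes "integrable M F" "G \<in> borel_measurable M" "\<And>x. \<bar>G x\<bar> \<le> 1"
  shows "integrable M (\<lambda>x. F x * G x)"
proof (rule Bochner_Integration.integrable_bound[OF assms(1)])
  show "(\<lambda>x. F x * G x) \<in> borel_measurable M"
    using borel_measurable_integrable[OF assms(1)] assms(2) by measurable
  show "AE x in M. norm (F x * G x) \<le> norm (F x)"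
    using assms(3) by (intro AE_I2) (simp add: abs_mult mult_left_le)
qed

lemma integral_derivative_compact_support:
  fixes K k :: "real \<Rightarrow> real"
  assumes "\<And>y. (K has_real_derivative k y) (at y)" "continuous_on UNIV k"
    and "\<And>y. R < \<bar>y\<bar> \<Longrightarrow> K y = 0 \<and> k y = 0"
  shows "(\<integral>y. k y \<partial>lborel) = 0"
proof -
  define R' where "R' = \<bar>R\<bar> + 1"
  have "(\<integral>y. indicator {-R'..R'} y *\<^sub>R k y \<partial>lborel) = K R' - K (-R')"
    using assms(1,2) unfolding R'_def
    by (intro integral_FTC_atLeastAtMost)
       (auto simp: has_real_derivative_iff_has_vector_derivative
        intro: has_vector_derivative_at_within continuous_on_subset)
  also have "\<dots> = 0"
    using assms(3)[of R'] assms(3)[of "-R'"] by (simp add: R'_def)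
  also have "(\<lambda>y. indicator {-R'..R'} y *\<^sub>R k y) = k"
    using assms(3) by (force simp: R'_def indicator_def fun_eq_iff abs_le_iff)
  finally show ?thesis .
qed

section \<open>Partial derivatives in spacetime\<close>

(* As in coord and line, every spatial index a other than 1 acts as a = 2. *)
definition space_coord :: "nat \<Rightarrow> real \<times> real \<Rightarrow> real" where
  "space_coord a x = (if a = 1 then fst x else snd x)"

definition space_coord_upd :: "nat \<Rightarrow> real \<times> real \<Rightarrow> real \<Rightarrow> real \<times> real" where
  "space_coord_upd a x y = (if a = 1 then (y, snd x) else (fst x, y))"

lemma space_coord_upd_same [simp]: "space_coord a (space_coord_upd a x y) = y"
  by (simp add: space_coord_def space_coord_upd_def)

lemma space_coord_upd_upd [simp]:
  "space_coord_upd a (space_coord_upd a x y) z = space_coord_upd a x z"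
  by (simp add: space_coord_upd_def)

lemma space_coord_1 [simp]: "space_coord 1 x = fst x"
  and space_coord_2 [simp]: "space_coord 2 x = snd x"
  by (simp_all add: space_coord_def)

lemma coord_space: "a \<in> {1, 2} \<Longrightarrow> coord a t x = space_coord a x"
  by (auto simp: coord_def space_coord_def)

lemma line_space: "a \<in> {1, 2} \<Longrightarrow> line a u t x = (\<lambda>y. u t (space_coord_upd a x y))"
  by (auto simp: line_def space_coord_upd_def)

lemma abs_space_coord_le_norm: "\<bar>space_coord a x\<bar> \<le> norm x"
  by (cases x) (auto simp: space_coord_def norm_Pair real_sqrt_ge_abs1 real_sqrt_ge_abs2)

lemma norm_space_coord_upd_ge: "\<bar>y\<bar> \<le> norm (space_coord_upd a x y)"
  using abs_space_coord_le_norm[of a "space_coord_upd a x y"] by simp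

lemma continuous_on_space_coord [continuous_intros]:
  "continuous_on S f \<Longrightarrow> continuous_on S (\<lambda>z. space_coord a (f z))"
  by (cases "a = 1") (simp_all add: space_coord_def continuous_intros)

lemma continuous_on_space_coord_upd [continuous_intros]:
  "continuous_on S f \<Longrightarrow> continuous_on S (\<lambda>z. space_coord_upd a x (f z))"
  by (cases "a = 1") (simp_all add: space_coord_upd_def continuous_intros)

lemma pd_has_derivative:
  assumes "C1_reg g" "i < 3"
  shows "(line i g t x has_real_derivative pd i g t x) (at (coord i t x))"
  unfolding pd_def DERIV_deriv_iff_real_differentiable using assms unfolding C1_reg_def by blast

lemma pd_time_has_derivative:
  "C1_reg g \<Longrightarrow> ((\<lambda>t. g t x) has_real_derivative pd 0 g t x) (at t)"
  using pd_has_derivative[of g 0 t x] by (simp add: line_def coord_def)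

lemma pd_space_has_derivative:
  assumes "C1_reg g" "a \<in> {1, 2}"
  shows "((\<lambda>y. g t (space_coord_upd a x y)) has_real_derivative
          pd a g t (space_coord_upd a x y)) (at y)"
  using pd_has_derivative[OF assms(1), of a t "space_coord_upd a x y"] assms(2)
  by (auto simp: line_space coord_space)

lemma continuous_on_pd:
  "C1_reg g \<Longrightarrow> i < 3 \<Longrightarrow> continuous_on S \<tau> \<Longrightarrow> continuous_on S \<xi> \<Longrightarrow>
    continuous_on S (\<lambda>z. pd i g (\<tau> z) (\<xi> z))"
  unfolding C1_reg_def
  using continuous_on_compose2[of UNIV "\<lambda>p. pd i g (fst p) (snd p)" S "\<lambda>z. (\<tau> z, \<xi> z)"]
  by (auto intro: continuous_intros)

lemma pd_eq_0_on_open: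
  assumes "open A" "(t, x) \<in> A" "\<And>t' x'. (t', x') \<in> A \<Longrightarrow> u t' x' = 0"
  shows "pd i u t x = 0"
proof -
  define P where
    "P y = (if i = 0 then (y, x) else if i = 1 then (t, (y, snd x)) else (t, (fst x, y)))" for y
  have "isCont P (coord i t x)"
    unfolding P_def by (cases "i = 0"; cases "i = 1") (auto intro!: continuous_intros)
  moreover have "P (coord i t x) = (t, x)"
    by (simp add: P_def coord_def)
  ultimately have "eventually (\<lambda>y. P y \<in> A) (nhds (coord i t x))"
    using assms(1,2) by (simp add: continuous_at_open eventually_nhds)
  then have "eventually (\<lambda>y. line i u t x y = 0) (nhds (coord i t x))"
    by (rule eventually_mono) (auto simp: P_def line_def split: if_splits intro: assms(3))
  then have "pd i u t x = deriv (\<lambda>_. 0) (coord i t x)"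
    unfolding pd_def by (rule deriv_cong_ev) simp
  then show ?thesis by simp
qed

lemma pd_eq_0_outside_cone:
  assumes "\<forall>t x. norm x > t - 1 \<longrightarrow> u t x = 0" "norm x > t - 1"
  shows "pd i u t x = 0"
proof (rule pd_eq_0_on_open)
  show "open {(t, x). t - 1 < norm x}"
    by (auto intro!: open_Collect_less continuous_intros simp: case_prod_beta')
qed (use assms in auto)

lemma pd_time_space_has_derivative:
  assumes "C1_reg g" "a \<in> {1, 2}"
  shows "((\<lambda>(t, y). g t (space_coord_upd a x y)) has_derivative
          (\<lambda>(dt, dy). pd 0 g t0 (space_coord_upd a x y0) * dt
            + pd a g t0 (space_coord_upd a x y0) * dy))
         (at (t0, y0))"
proof -
  have dt: "((\<lambda>t. g t (space_coord_upd a x y0)) has_derivative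
      (\<lambda>dt. pd 0 g t0 (space_coord_upd a x y0) * dt)) (at t0)"
    using pd_time_has_derivative[OF assms(1), of "space_coord_upd a x y0" t0]
    by (simp add: has_field_derivative_def)
  have dy: "((\<lambda>y. g t (space_coord_upd a x y)) has_derivative
             blinfun_apply (blinfun_mult_right (pd a g t (space_coord_upd a x y)))) (at y)" for t y
    using pd_space_has_derivative[OF assms] by (simp add: has_field_derivative_def mult.commute)
  have "continuous_on UNIV (\<lambda>p. pd a g (fst p) (space_coord_upd a x (snd p)))"
    using assms by (intro continuous_on_pd continuous_intros) auto
  then have "isCont (\<lambda>p. blinfun_mult_right (pd a g (fst p) (space_coord_upd a x (snd p))))
      (t0, y0)"
    by (simp add: continuous_on_eq_continuous_at
        bounded_linear.continuous[OF bounded_linear_blinfun_mult_right])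
  then have "continuous (at (t0, y0) within UNIV \<times> UNIV)
      (\<lambda>(t, y). blinfun_mult_right (pd a g t (space_coord_upd a x y)))"
    by (simp add: case_prod_beta')
  from has_derivative_partialsI[OF dt dy this]
  show ?thesis by (simp add: mult.commute)
qed

lemma pd_along_graph_has_derivative:
  assumes "C1_reg g" "a \<in> {1, 2}" "(\<tau> has_real_derivative \<tau>') (at y0)"
  shows "((\<lambda>y. g (\<tau> y) (space_coord_upd a x y)) has_real_derivative
          pd 0 g (\<tau> y0) (space_coord_upd a x y0) * \<tau>' + pd a g (\<tau> y0) (space_coord_upd a x y0))
         (at y0)"
proof -
  have "((\<lambda>y. (\<tau> y, y)) has_derivative (\<lambda>h. (\<tau>' * h, h))) (at y0)"
    using assms(3) by (auto simp: has_field_derivative_def intro!: derivative_eq_intros)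
  from has_derivative_compose[OF this pd_time_space_has_derivative[OF assms(1,2), of x]]
  have "((\<lambda>y. g (\<tau> y) (space_coord_upd a x y)) has_derivative
      (\<lambda>h. pd 0 g (\<tau> y0) (space_coord_upd a x y0) * (\<tau>' * h)
        + pd a g (\<tau> y0) (space_coord_upd a x y0) * h)) (at y0)"
    by simp
  then show ?thesis
    unfolding has_field_derivative_def
    by (rule has_derivative_eq_rhs) (simp add: fun_eq_iff algebra_simps)
qed

lemma pd_space_time_commute:
  assumes "C2_reg u" "a \<in> {1, 2}"
  shows "pd a (pd 0 u) t x = pd 0 (pd a u) t x"
proof -
  have u: "C1_reg u" and u0: "C1_reg (pd 0 u)" and ua: "C1_reg (pd a u)"
    using assms by (auto simp: C2_reg_def)
  have a3: "a < 3" using assms(2) by auto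
  have cont: "isCont (\<lambda>p. pd j g (fst p) (space_coord_upd a x (snd p))) p"
    if "C1_reg g" "j < 3" for g j p
  proof -
    have "continuous_on UNIV (\<lambda>p. pd j g (fst p) (space_coord_upd a x (snd p)))"
      by (intro continuous_on_pd that continuous_intros)
    then show ?thesis by (metis UNIV_I continuous_on_eq_continuous_at open_UNIV)
  qed
  have "pd a (pd 0 u) t (space_coord_upd a x (space_coord a x))
      = pd 0 (pd a u) t (space_coord_upd a x (space_coord a x))"
    by (rule mixed_partials_eq[where H="\<lambda>t y. u t (space_coord_upd a x y)"
          and Hx="\<lambda>t y. pd 0 u t (space_coord_upd a x y)"
          and Hy="\<lambda>t y. pd a u t (space_coord_upd a x y)"
          and Hxy="\<lambda>t y. pd a (pd 0 u) t (space_coord_upd a x y)"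
          and Hyx="\<lambda>t y. pd 0 (pd a u) t (space_coord_upd a x y)"])
       (use a3 in \<open>auto intro: pd_time_has_derivative[OF u] pd_time_has_derivative[OF ua]
          pd_space_has_derivative[OF u assms(2)] pd_space_has_derivative[OF u0 assms(2)]
          cont[OF u0] cont[OF ua]\<close>)
  moreover have "space_coord_upd a x (space_coord a x) = x"
    by (simp add: space_coord_upd_def space_coord_def)
  ultimately show ?thesis by simp
qed

lemma grad_sq_eq: "grad_sq u t x = (pd 0 u t x)\<^sup>2 + (pd 1 u t x)\<^sup>2 + (pd 2 u t x)\<^sup>2"
  by (simp add: grad_sq_def numeral_3_eq_3 numeral_2_eq_2 lessThan_Suc)

section \<open>Hyperboloids and the ghost weight\<close>

lemma hyp_t_sq: "(hyp_t s x)\<^sup>2 = s\<^sup>2 + (norm x)\<^sup>2"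
  by (simp add: hyp_t_def)

lemma hyp_t_gt_norm: "s \<noteq> 0 \<Longrightarrow> norm x < hyp_t s x"
  unfolding hyp_t_def by (intro real_less_rsqrt) simp

lemma hyp_t_pos: "s \<noteq> 0 \<Longrightarrow> 0 < hyp_t s x"
  using hyp_t_gt_norm[of s x] norm_ge_zero[of x] by linarith

lemma hyp_t_nonzero: "s \<noteq> 0 \<Longrightarrow> hyp_t s x \<noteq> 0"
  using hyp_t_pos[of s x] by simp

lemma hyp_t_sub_norm_lt_1:
  assumes "s\<^sup>2 < norm x"
  shows "hyp_t s x - norm x < 1"
proof -
  have "norm x \<le> hyp_t s x"
    unfolding hyp_t_def by (simp add: real_le_rsqrt)
  moreover have "(hyp_t s x - norm x) * (hyp_t s x + norm x) = s\<^sup>2"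
    using hyp_t_sq[of s x] by (simp add: algebra_simps power2_eq_square)
  ultimately show ?thesis
    using assms by (smt (verit, best) mult_le_cancel_right1 norm_ge_zero zero_le_power2)
qed

lemma continuous_on_hyp_t [continuous_intros]:
  "continuous_on S \<sigma> \<Longrightarrow> continuous_on S \<xi> \<Longrightarrow> continuous_on S (\<lambda>z. hyp_t (\<sigma> z) (\<xi> z))"
  unfolding hyp_t_def by (intro continuous_intros)

lemma norm_space_coord_upd_eq:
  "norm (space_coord_upd a x y) = sqrt ((if a = 1 then snd x else fst x)\<^sup>2 + y\<^sup>2)"
  by (simp add: space_coord_upd_def norm_Pair add.commute)

lemma norm_space_coord_upd_has_derivative:
  assumes "space_coord_upd a x y \<noteq> 0"
  shows "((\<lambda>y. norm (space_coord_upd a x y)) has_real_derivative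
          y / norm (space_coord_upd a x y)) (at y)"
proof -
  have "0 < (if a = 1 then snd x else fst x)\<^sup>2 + y\<^sup>2"
    using assms
    by (auto simp: space_coord_upd_def zero_prod_def sum_power2_gt_zero_iff split: if_splits)
  from sqrt_add_sq_has_derivative[OF this] show ?thesis
    by (simp only: norm_space_coord_upd_eq)
qed

lemma hyp_t_has_derivative:
  "s \<noteq> 0 \<Longrightarrow> ((\<lambda>s. hyp_t s x) has_real_derivative s / hyp_t s x) (at s)"
  using sqrt_add_sq_has_derivative[of "(norm x)\<^sup>2" s] unfolding hyp_t_def
  by (simp add: add.commute add_pos_nonneg)

lemma hyp_t_space_has_derivative:
  assumes "s \<noteq> 0"
  shows "((\<lambda>y. hyp_t s (space_coord_upd a x y)) has_real_derivative
          y / hyp_t s (space_coord_upd a x y)) (at y)"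
  using sqrt_add_sq_has_derivative[of "s\<^sup>2 + (if a = 1 then snd x else fst x)\<^sup>2" y] assms
  by (simp add: hyp_t_def norm_space_coord_upd_eq add.assoc add_pos_nonneg)

definition ghost_weight :: "real \<Rightarrow> real \<Rightarrow> real \<times> real \<Rightarrow> real" where
  "ghost_weight \<gamma> s x = (hyp_t s x - norm x) powr (-\<gamma>)"

lemma continuous_on_ghost_weight:
  assumes "continuous_on S \<sigma>" "continuous_on S \<xi>" "\<And>z. z \<in> S \<Longrightarrow> \<sigma> z \<noteq> 0"
  shows "continuous_on S (\<lambda>z. ghost_weight \<gamma> (\<sigma> z) (\<xi> z))"
  unfolding ghost_weight_def
proof (intro continuous_on_powr continuous_intros assms(1,2) ballI)
  show "hyp_t (\<sigma> z) (\<xi> z) - norm (\<xi> z) \<noteq> 0" if "z \<in> S" for z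
    using hyp_t_gt_norm[OF assms(3)[OF that], of "\<xi> z"] by simp
qed

lemma ghost_weight_has_derivative:
  assumes "s \<noteq> 0"
  shows "((\<lambda>s. ghost_weight \<gamma> s x) has_real_derivative
           - \<gamma> * ghost_weight (\<gamma> + 1) s x * (s / hyp_t s x)) (at s)"
  unfolding ghost_weight_def using hyp_t_gt_norm[OF assms, of x]
  by (auto intro!: derivative_eq_intros hyp_t_has_derivative[OF assms])

lemma ghost_weight_space_has_derivative:
  assumes "s \<noteq> 0" "space_coord_upd a x y \<noteq> 0"
  defines "p \<equiv> space_coord_upd a x y"
  shows "((\<lambda>y. ghost_weight \<gamma> s (space_coord_upd a x y)) has_real_derivative
           - \<gamma> * ghost_weight (\<gamma> + 1) s p * (y / hyp_t s p - y / norm p)) (at y)"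
  unfolding ghost_weight_def p_def using hyp_t_gt_norm[OF assms(1), of "space_coord_upd a x y"]
  by (auto intro!: derivative_eq_intros hyp_t_space_has_derivative[OF assms(1)]
      norm_space_coord_upd_has_derivative[OF assms(2)] simp: right_diff_distrib)

definition on_hyp :: "spacetime_fn \<Rightarrow> real \<Rightarrow> real \<times> real \<Rightarrow> real" where
  "on_hyp g s x = g (hyp_t s x) x"

lemma continuous_on_on_hyp_pd:
  "C1_reg g \<Longrightarrow> i < 3 \<Longrightarrow> continuous_on S \<sigma> \<Longrightarrow> continuous_on S \<xi> \<Longrightarrow>
    continuous_on S (\<lambda>z. on_hyp (pd i g) (\<sigma> z) (\<xi> z))"
  unfolding on_hyp_def by (intro continuous_on_pd continuous_intros)

lemma on_hyp_pd_eq_0: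
  "\<forall>t x. norm x > t - 1 \<longrightarrow> u t x = 0 \<Longrightarrow> s\<^sup>2 < norm x \<Longrightarrow> on_hyp (pd i u) s x = 0"
  unfolding on_hyp_def using hyp_t_sub_norm_lt_1[of s x] by (intro pd_eq_0_outside_cone) auto

lemma on_hyp_has_derivative:
  assumes "C1_reg g" "s \<noteq> 0"
  shows "((\<lambda>s. on_hyp g s x) has_real_derivative on_hyp (pd 0 g) s x * (s / hyp_t s x)) (at s)"
  unfolding on_hyp_def
  by (rule DERIV_chain2[OF pd_time_has_derivative[OF assms(1)] hyp_t_has_derivative[OF assms(2)]])

lemma on_hyp_space_has_derivative:
  fixes x :: "real \<times> real" and y :: real
  assumes "C1_reg g" "a \<in> {1, 2}" "s \<noteq> 0"
  defines "p \<equiv> space_coord_upd a x y"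
  shows "((\<lambda>y. on_hyp g s (space_coord_upd a x y)) has_real_derivative
          on_hyp (pd 0 g) s p * (y / hyp_t s p) + on_hyp (pd a g) s p) (at y)"
  unfolding on_hyp_def p_def
  by (rule pd_along_graph_has_derivative[OF assms(1,2) hyp_t_space_has_derivative[OF assms(3)]])

section \<open>The weighted energy identity\<close>

definition energy_density :: "spacetime_fn \<Rightarrow> real \<Rightarrow> real \<times> real \<Rightarrow> real" where
  "energy_density u s x = (let t = hyp_t s x; U = (\<lambda>i. on_hyp (pd i u) s x) in
     (U 0)\<^sup>2 + (U 1)\<^sup>2 + (U 2)\<^sup>2 + 2 * ((fst x / t) * U 1 * U 0 + (snd x / t) * U 2 * U 0))"

definition weighted_energy_density :: "spacetime_fn \<Rightarrow> real \<Rightarrow> real \<Rightarrow> real \<times> real \<Rightarrow> real" where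
  "weighted_energy_density u \<gamma> s x = ghost_weight \<gamma> s x * energy_density u s x / 2"

definition energy_rate :: "spacetime_fn \<Rightarrow> real \<Rightarrow> real \<Rightarrow> real \<times> real \<Rightarrow> real" where
  "energy_rate u \<gamma> s x = (let t = hyp_t s x; \<rho> = s / t; W = ghost_weight \<gamma> s x;
       U = (\<lambda>i. on_hyp (pd i u) s x); B = (\<lambda>i j. on_hyp (pd j (pd i u)) s x) in
     - \<gamma> * ghost_weight (\<gamma> + 1) s x * \<rho> * energy_density u s x / 2
     + W * \<rho> * (U 0 * B 0 0 + U 1 * B 1 0 + U 2 * B 2 0
         + ((fst x * B 1 0 + snd x * B 2 0) * U 0 + (fst x * U 1 + snd x * U 2) * B 0 0) / t
         - (fst x * U 1 + snd x * U 2) * U 0 / t\<^sup>2))"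

definition flux :: "spacetime_fn \<Rightarrow> real \<Rightarrow> nat \<Rightarrow> real \<Rightarrow> real \<times> real \<Rightarrow> real" where
  "flux u \<gamma> a s x =
     - (s / hyp_t s x) * ghost_weight \<gamma> s x * on_hyp (pd a u) s x * on_hyp (pd 0 u) s x"

definition flux_deriv_smooth :: "spacetime_fn \<Rightarrow> real \<Rightarrow> nat \<Rightarrow> real \<Rightarrow> real \<times> real \<Rightarrow> real" where
  "flux_deriv_smooth u \<gamma> a s x = (let t = hyp_t s x; \<rho> = s / t; W = ghost_weight \<gamma> s x;
       y = space_coord a x; U = (\<lambda>i. on_hyp (pd i u) s x); B = (\<lambda>i j. on_hyp (pd j (pd i u)) s x) in
     \<rho> * W * U a * U 0 * y / t\<^sup>2 + \<gamma> * \<rho> * ghost_weight (\<gamma> + 1) s x * U a * U 0 * y / t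
     - \<rho> * W * ((B a 0 * y / t + B a a) * U 0 + U a * (B 0 0 * y / t + B 0 a)))"

(* The last term comes from differentiating the distance t - r to the light cone; it is
   discontinuous at the origin, where the division yields 0. *)
definition flux_deriv :: "spacetime_fn \<Rightarrow> real \<Rightarrow> nat \<Rightarrow> real \<Rightarrow> real \<times> real \<Rightarrow> real" where
  "flux_deriv u \<gamma> a s x =
     flux_deriv_smooth u \<gamma> a s x + \<gamma> * flux u (\<gamma> + 1) a s x * (space_coord a x / norm x)"

definition wave_source_term :: "spacetime_fn \<Rightarrow> real \<Rightarrow> real \<Rightarrow> real \<times> real \<Rightarrow> real" where
  "wave_source_term u \<gamma> s x = (let B = (\<lambda>i j. on_hyp (pd j (pd i u)) s x) in
     (s / hyp_t s x) * ghost_weight \<gamma> s x * on_hyp (pd 0 u) s x * (B 0 0 - B 1 1 - B 2 2))"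

definition ghost_term :: "spacetime_fn \<Rightarrow> real \<Rightarrow> real \<Rightarrow> real \<times> real \<Rightarrow> real" where
  "ghost_term u \<gamma> s x = (let U = (\<lambda>i. on_hyp (pd i u) s x) in
     \<gamma> / 2 * (s / hyp_t s x) * ghost_weight (\<gamma> + 1) s x
       * ((U 1 + fst x / norm x * U 0)\<^sup>2 + (U 2 + snd x / norm x * U 0)\<^sup>2))"

lemma weighted_energy_density_has_derivative:
  assumes "C2_reg u" "s \<noteq> 0"
  shows "((\<lambda>s. weighted_energy_density u \<gamma> s x) has_real_derivative energy_rate u \<gamma> s x) (at s)"
proof -
  have U: "((\<lambda>s. on_hyp (pd i u) s x) has_real_derivative
      on_hyp (pd 0 (pd i u)) s x * (s / hyp_t s x)) (at s)"
    if "i < 3" for i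
    using assms that by (intro on_hyp_has_derivative) (auto simp: C2_reg_def)
  show ?thesis
    unfolding weighted_energy_density_def energy_density_def energy_rate_def Let_def
    using hyp_t_nonzero[OF assms(2), of x]
    by (auto intro!: derivative_eq_intros U ghost_weight_has_derivative hyp_t_has_derivative
        assms(2) simp: field_simps power2_eq_square)
qed

lemma flux_space_has_derivative:
  assumes "C2_reg u" "a \<in> {1, 2}" "s \<noteq> 0" "space_coord_upd a x y \<noteq> 0"
  shows "((\<lambda>y. flux u \<gamma> a s (space_coord_upd a x y)) has_real_derivative
           flux_deriv u \<gamma> a s (space_coord_upd a x y)) (at y)"
proof -
  define p where "p = space_coord_upd a x y"
  have U: "((\<lambda>y. on_hyp (pd i u) s (space_coord_upd a x y)) has_real_derivative
      on_hyp (pd 0 (pd i u)) s p * (y / hyp_t s p) + on_hyp (pd a (pd i u)) s p) (at y)"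
    if "i < 3" for i
    unfolding p_def using assms that by (intro on_hyp_space_has_derivative) (auto simp: C2_reg_def)
  have "a < 3" using assms(2) by auto
  note derivs = U[of 0] U[OF \<open>a < 3\<close>]
    ghost_weight_space_has_derivative[OF assms(3,4), folded p_def]
    hyp_t_space_has_derivative[OF assms(3), of a x y, folded p_def]
  have py: "space_coord a p = y" by (simp add: p_def)
  have "norm p \<noteq> 0" using assms(4) by (simp add: p_def)
  with hyp_t_nonzero[OF assms(3), of p] show ?thesis
    unfolding flux_def flux_deriv_def flux_deriv_smooth_def Let_def p_def[symmetric]
    by (auto intro!: derivative_eq_intros derivs
        simp: py p_def[symmetric] field_simps power2_eq_square)
qed

(* U_i and B_ij stand for d_i u and d_j d_i u on H_s, with B_10 = B_01 and B_20 = B_02 already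
   substituted. *)
lemma energy_identity_algebra:
  fixes s t r x1 x2 W P \<gamma> U0 U1 U2 B00 B01 B02 B11 B22 :: real
  assumes "t \<noteq> 0" "r \<noteq> 0" "r\<^sup>2 = x1\<^sup>2 + x2\<^sup>2"
  shows "- \<gamma> * P * (s / t)
           * (U0\<^sup>2 + U1\<^sup>2 + U2\<^sup>2 + 2 * ((x1 / t) * U1 * U0 + (x2 / t) * U2 * U0)) / 2
       + W * (s / t) * (U0 * B00 + U1 * B01 + U2 * B02
         + ((x1 * B01 + x2 * B02) * U0 + (x1 * U1 + x2 * U2) * B00) / t
         - (x1 * U1 + x2 * U2) * U0 / t\<^sup>2)
     + ((s / t) * W * U1 * U0 * x1 / t\<^sup>2 + \<gamma> * (s / t) * P * U1 * U0 * x1 / t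
       - (s / t) * W * ((B01 * x1 / t + B11) * U0 + U1 * (B00 * x1 / t + B01))
       + \<gamma> * (- (s / t) * P * U1 * U0) * (x1 / r))
     + ((s / t) * W * U2 * U0 * x2 / t\<^sup>2 + \<gamma> * (s / t) * P * U2 * U0 * x2 / t
       - (s / t) * W * ((B02 * x2 / t + B22) * U0 + U2 * (B00 * x2 / t + B02))
       + \<gamma> * (- (s / t) * P * U2 * U0) * (x2 / r))
     = (s / t) * W * U0 * (B00 - B11 - B22)
       - \<gamma> / 2 * (s / t) * P * ((U1 + x1 / r * U0)\<^sup>2 + (U2 + x2 / r * U0)\<^sup>2)"
proof -
  have "(U1 + x1 / r * U0)\<^sup>2 + (U2 + x2 / r * U0)\<^sup>2
      = U1\<^sup>2 + U2\<^sup>2 + 2 * (x1 * U1 + x2 * U2) * U0 / r + (x1\<^sup>2 + x2\<^sup>2) / r\<^sup>2 * U0\<^sup>2"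
    using assms(2) by (simp add: field_simps power2_eq_square)
  also have "(x1\<^sup>2 + x2\<^sup>2) / r\<^sup>2 = 1"
    using assms(2) by (simp add: assms(3)[symmetric])
  finally have squares: "(U1 + x1 / r * U0)\<^sup>2 + (U2 + x2 / r * U0)\<^sup>2
      = U1\<^sup>2 + U2\<^sup>2 + 2 * (x1 * U1 + x2 * U2) * U0 / r + U0\<^sup>2" by simp
  show ?thesis
    unfolding squares using assms(1,2) by (simp add: field_simps power2_eq_square)
qed

lemma energy_identity:
  assumes "C2_reg u" "s \<noteq> 0" "x \<noteq> 0"
  shows "energy_rate u \<gamma> s x + flux_deriv u \<gamma> 1 s x + flux_deriv u \<gamma> 2 s x
       = wave_source_term u \<gamma> s x - ghost_term u \<gamma> s x"
proof -
  have sym1: "on_hyp (pd 1 (pd 0 u)) s x = on_hyp (pd 0 (pd 1 u)) s x"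
    and sym2: "on_hyp (pd 2 (pd 0 u)) s x = on_hyp (pd 0 (pd 2 u)) s x"
    unfolding on_hyp_def using pd_space_time_commute[OF assms(1)] by simp_all
  have "hyp_t s x \<noteq> 0" using hyp_t_nonzero[OF assms(2)] .
  moreover have "norm x \<noteq> 0" using assms(3) by simp
  moreover have "(norm x)\<^sup>2 = (fst x)\<^sup>2 + (snd x)\<^sup>2"
    by (simp add: norm_Pair[of "fst x" "snd x", simplified])
  ultimately show ?thesis
    unfolding energy_rate_def flux_deriv_def flux_deriv_smooth_def flux_def wave_source_term_def
      ghost_term_def energy_density_def Let_def space_coord_1 space_coord_2 sym1 sym2
    by (rule energy_identity_algebra)
qed

lemma ghost_term_nonneg: "0 < s \<Longrightarrow> 0 \<le> \<gamma> \<Longrightarrow> 0 \<le> ghost_term u \<gamma> s x"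
  unfolding ghost_term_def ghost_weight_def Let_def using hyp_t_pos[of s x] by simp

section \<open>Integration over the hyperboloids\<close>

lemma hyp_quantities_eq_0:
  assumes "\<forall>t x. norm x > t - 1 \<longrightarrow> u t x = 0" "s\<^sup>2 < norm x"
  shows "energy_density u s x = 0" "weighted_energy_density u \<gamma> s x = 0" "energy_rate u \<gamma> s x = 0"
    "flux u \<gamma> a s x = 0" "flux_deriv_smooth u \<gamma> a s x = 0" "wave_source_term u \<gamma> s x = 0"
  using on_hyp_pd_eq_0[OF assms]
  by (simp_all add: energy_density_def weighted_energy_density_def energy_rate_def flux_def
      flux_deriv_smooth_def wave_source_term_def Let_def power2_eq_square)

lemma continuous_on_hyp_quantities:
  assumes "C2_reg u" "continuous_on S \<sigma>" "continuous_on S \<xi>" "\<And>z. z \<in> S \<Longrightarrow> \<sigma> z \<noteq> 0"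
  shows "continuous_on S (\<lambda>z. energy_density u (\<sigma> z) (\<xi> z))"
    and "continuous_on S (\<lambda>z. weighted_energy_density u \<gamma> (\<sigma> z) (\<xi> z))"
    and "continuous_on S (\<lambda>z. energy_rate u \<gamma> (\<sigma> z) (\<xi> z))"
    and "continuous_on S (\<lambda>z. wave_source_term u \<gamma> (\<sigma> z) (\<xi> z))"
    and "a < 3 \<Longrightarrow> continuous_on S (\<lambda>z. flux u \<gamma> a (\<sigma> z) (\<xi> z))"
    and "a < 3 \<Longrightarrow> continuous_on S (\<lambda>z. flux_deriv_smooth u \<gamma> a (\<sigma> z) (\<xi> z))"
proof -
  have "C1_reg u" "\<And>i. i < 3 \<Longrightarrow> C1_reg (pd i u)" using assms(1) by (auto simp: C2_reg_def)
  note cont = continuous_intros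
    continuous_on_on_hyp_pd[OF this(1)] continuous_on_on_hyp_pd[OF this(2)]
    continuous_on_ghost_weight assms(2-4)
  have "hyp_t (\<sigma> z) (\<xi> z) \<noteq> 0" "(hyp_t (\<sigma> z) (\<xi> z))\<^sup>2 \<noteq> 0" if "z \<in> S" for z
    using hyp_t_nonzero[OF assms(4)[OF that]] by simp_all
  note cont = cont this ballI
  show "continuous_on S (\<lambda>z. energy_density u (\<sigma> z) (\<xi> z))"
    unfolding energy_density_def Let_def by (intro cont) simp_all
  show "continuous_on S (\<lambda>z. weighted_energy_density u \<gamma> (\<sigma> z) (\<xi> z))"
    unfolding weighted_energy_density_def energy_density_def Let_def by (intro cont) simp_all
  show "continuous_on S (\<lambda>z. energy_rate u \<gamma> (\<sigma> z) (\<xi> z))"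
    unfolding energy_rate_def energy_density_def Let_def by (intro cont) simp_all
  show "continuous_on S (\<lambda>z. wave_source_term u \<gamma> (\<sigma> z) (\<xi> z))"
    unfolding wave_source_term_def Let_def by (intro cont) simp_all
  show "a < 3 \<Longrightarrow> continuous_on S (\<lambda>z. flux u \<gamma> a (\<sigma> z) (\<xi> z))"
    unfolding flux_def by (intro cont) simp_all
  show "a < 3 \<Longrightarrow> continuous_on S (\<lambda>z. flux_deriv_smooth u \<gamma> a (\<sigma> z) (\<xi> z))"
    unfolding flux_deriv_smooth_def Let_def by (intro cont) simp_all
qed

lemma integrable_hyp_quantities:
  assumes "C2_reg u" "\<forall>t x. norm x > t - 1 \<longrightarrow> u t x = 0" "s \<noteq> 0"
  shows "integrable lborel (energy_density u s)"
    and "integrable lborel (weighted_energy_density u \<gamma> s)"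
    and "integrable lborel (energy_rate u \<gamma> s)"
    and "integrable lborel (wave_source_term u \<gamma> s)"
    and "a < 3 \<Longrightarrow> integrable lborel (flux u \<gamma> a s)"
    and "a < 3 \<Longrightarrow> integrable lborel (flux_deriv_smooth u \<gamma> a s)"
proof -
  have int: "integrable lborel F" if "continuous_on UNIV F" "\<And>x. s\<^sup>2 < norm x \<Longrightarrow> F x = 0"
    for F :: "real \<times> real \<Rightarrow> real"
    using that by (intro integrable_continuous_compact_support[of "cball 0 (s\<^sup>2)"])
      (auto elim: continuous_on_subset simp: mem_cball_0 not_le)
  note cont =
    continuous_on_hyp_quantities[OF assms(1) continuous_on_const continuous_on_id, of UNIV s]
  show "integrable lborel (energy_density u s)"
    and "integrable lborel (weighted_energy_density u \<gamma> s)"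
    and "integrable lborel (energy_rate u \<gamma> s)"
    and "integrable lborel (wave_source_term u \<gamma> s)"
    and "a < 3 \<Longrightarrow> integrable lborel (flux u \<gamma> a s)"
    and "a < 3 \<Longrightarrow> integrable lborel (flux_deriv_smooth u \<gamma> a s)"
    using cont hyp_quantities_eq_0[OF assms(2)] assms(3) by (auto intro!: int)
qed

lemma integrable_flux_deriv:
  assumes "C2_reg u" "\<forall>t x. norm x > t - 1 \<longrightarrow> u t x = 0" "s \<noteq> 0" "a < 3"
  shows "integrable lborel (flux_deriv u \<gamma> a s)"
proof -
  have "space_coord a \<in> borel_measurable borel" "norm \<in> borel_measurable borel"
    using borel_measurable_continuous_onI[OF continuous_on_space_coord[OF continuous_on_id]]
      borel_measurable_continuous_onI[OF continuous_on_norm_id] by simp_all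
  then have meas: "(\<lambda>x. space_coord a x / norm x) \<in> borel_measurable lborel"
    by (intro borel_measurable_divide) (simp_all add: measurable_lborel1)
  have bound: "\<bar>space_coord a x / norm x\<bar> \<le> 1" for x
    using abs_space_coord_le_norm[of a x] by (simp add: abs_div_pos divide_le_eq_1)
  have "integrable lborel (\<lambda>x. \<gamma> * flux u (\<gamma> + 1) a s x)"
    using integrable_hyp_quantities(5)[OF assms] by simp
  from integrable_mult_bounded[OF this meas bound]
  show ?thesis
    unfolding flux_deriv_def[abs_def] using integrable_hyp_quantities(6)[OF assms] by simp
qed

lemma integral_eq_0_if_line_integrals_eq_0:
  fixes F :: "real \<times> real \<Rightarrow> real"
  assumes "integrable lborel F" "a \<in> {1, 2}"
    and "\<And>x. (\<And>y. space_coord_upd a x y \<noteq> 0) \<Longrightarrow> (\<integral>y. F (space_coord_upd a x y) \<partial>lborel) = 0"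
  shows "(\<integral>x. F x \<partial>lborel) = 0"
proof -
  have int: "integrable (lborel \<Otimes>\<^sub>M lborel) F"
    using assms(1) by (simp add: lborel_prod)
  (* For c \<noteq> 0, the line through (c, c) in direction a misses the origin. *)
  have "(\<integral>x. F x \<partial>lborel) = (\<integral>c. (\<integral>y. F (space_coord_upd a (c, c) y) \<partial>lborel) \<partial>lborel)"
  proof (cases "a = 1")
    case True
    then show ?thesis
      using lborel_pair.integral_snd[of "\<lambda>y c. F (y, c)"] int
      by (simp add: space_coord_upd_def lborel_prod)
  next
    case False
    then show ?thesis
      using lborel_pair.integral_fst[of "\<lambda>c y. F (c, y)"] int
      by (simp add: space_coord_upd_def lborel_prod)
  qed
  also have "\<dots> = 0"
  proof (rule integral_eq_zero_AE)
    show "AE c in lborel. (\<integral>y. F (space_coord_upd a (c, c) y) \<partial>lborel) = 0"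
      using AE_lborel_singleton[of 0]
      by eventually_elim (rule assms(3), auto simp: space_coord_upd_def prod_eq_iff)
  qed
  finally show ?thesis .
qed

lemma integral_flux_deriv_eq_0:
  assumes "C2_reg u" "\<forall>t x. norm x > t - 1 \<longrightarrow> u t x = 0" "s \<noteq> 0" "a \<in> {1, 2}"
  shows "(\<integral>x. flux_deriv u \<gamma> a s x \<partial>lborel) = 0"
proof (rule integral_eq_0_if_line_integrals_eq_0)
  have "a < 3" using assms(4) by auto
  then show "integrable lborel (flux_deriv u \<gamma> a s)"
    by (rule integrable_flux_deriv[OF assms(1-3)])
  fix x assume off_0: "\<And>y. space_coord_upd a x y \<noteq> 0"
  have "continuous_on UNIV (\<lambda>y. flux_deriv u \<gamma> a s (space_coord_upd a x y))"
    unfolding flux_deriv_def using off_0 \<open>a < 3\<close> assms(3)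
    by (intro continuous_intros continuous_on_hyp_quantities[OF assms(1)]) auto
  moreover have
    "flux u \<gamma> a s (space_coord_upd a x y) = 0 \<and> flux_deriv u \<gamma> a s (space_coord_upd a x y) = 0"
    if "s\<^sup>2 < \<bar>y\<bar>" for y
    using hyp_quantities_eq_0[OF assms(2) less_le_trans[OF that norm_space_coord_upd_ge]]
    by (simp add: flux_deriv_def)
  ultimately show "(\<integral>y. flux_deriv u \<gamma> a s (space_coord_upd a x y) \<partial>lborel) = 0"
    using flux_space_has_derivative[OF assms(1,4,3) off_0]
    by (intro integral_derivative_compact_support)
qed (fact assms(4))

lemma integral_energy_rate_le:
  assumes "C2_reg u" "\<forall>t x. norm x > t - 1 \<longrightarrow> u t x = 0" "0 < s" "0 \<le> \<gamma>"
  shows "(\<integral>x. energy_rate u \<gamma> s x \<partial>lborel) \<le> (\<integral>x. wave_source_term u \<gamma> s x \<partial>lborel)"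
proof -
  have s: "s \<noteq> 0" using assms(3) by simp
  note int = integrable_hyp_quantities[OF assms(1,2) s] integrable_flux_deriv[OF assms(1,2) s]
  have "(\<integral>x. energy_rate u \<gamma> s x \<partial>lborel)
      = (\<integral>x. energy_rate u \<gamma> s x + flux_deriv u \<gamma> 1 s x + flux_deriv u \<gamma> 2 s x \<partial>lborel)"
    using int integral_flux_deriv_eq_0[OF assms(1,2) s] by simp
  also have "\<dots> \<le> (\<integral>x. wave_source_term u \<gamma> s x \<partial>lborel)"
  proof (rule integral_mono_AE)
    show "AE x in lborel. energy_rate u \<gamma> s x + flux_deriv u \<gamma> 1 s x + flux_deriv u \<gamma> 2 s x
        \<le> wave_source_term u \<gamma> s x"
      using AE_lborel_singleton[of 0]
    proof eventually_elim
      case (elim x)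
      then show ?case
        using energy_identity[OF assms(1) s, of x \<gamma>] ghost_term_nonneg[OF assms(3,4), of u x]
        by simp
    qed
  qed (use int in simp_all)
  finally show ?thesis .
qed

lemma integrable_slab_compact_support:
  fixes F :: "real \<Rightarrow> real \<times> real \<Rightarrow> real"
  assumes "continuous_on ({s0..s1} \<times> UNIV) (\<lambda>p. F (fst p) (snd p))"
    and "\<And>s x. s \<in> {s0..s1} \<Longrightarrow> R < norm x \<Longrightarrow> F s x = 0"
  shows "integrable (lborel \<Otimes>\<^sub>M lborel) (\<lambda>(s, x). indicator {s0..s1} s * F s x)"
  unfolding lborel_prod
proof (rule integrable_continuous_compact_support[of "{s0..s1} \<times> cball 0 R"])
  show "compact ({s0..s1} \<times> cball (0 :: real \<times> real) R)"
    by (intro compact_Times compact_Icc compact_cball)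
  show "continuous_on ({s0..s1} \<times> cball 0 R) (\<lambda>(s, x). indicator {s0..s1} s * F s x)"
    using continuous_on_subset[OF assms(1)] by (rule continuous_on_eq) (auto simp: indicator_def)
  show "(\<lambda>(s, x). indicator {s0..s1} s * F s x) p = 0" if "p \<notin> {s0..s1} \<times> cball 0 R" for p
    using that assms(2)[of "fst p" "snd p"]
    by (cases "fst p \<in> {s0..s1}") (auto simp: case_prod_beta mem_Times_iff mem_cball_0 not_le)
qed

lemma weighted_energy_density_diff_eq_integral:
  assumes "C2_reg u" "0 < s0" "s0 \<le> s1"
  shows "weighted_energy_density u \<gamma> s1 x - weighted_energy_density u \<gamma> s0 x
      = (\<integral>s. indicator {s0..s1} s * energy_rate u \<gamma> s x \<partial>lborel)"
proof -
  have nz: "\<And>s. s \<in> {s0..s1} \<Longrightarrow> s \<noteq> 0" using assms(2) by auto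
  have "(\<integral>s. indicator {s0..s1} s *\<^sub>R energy_rate u \<gamma> s x \<partial>lborel)
      = weighted_energy_density u \<gamma> s1 x - weighted_energy_density u \<gamma> s0 x"
  proof (rule integral_FTC_atLeastAtMost[OF assms(3)])
    show "((\<lambda>s. weighted_energy_density u \<gamma> s x) has_vector_derivative energy_rate u \<gamma> s x)
        (at s within {s0..s1})" if "s0 \<le> s" "s \<le> s1" for s
      using weighted_energy_density_has_derivative[OF assms(1) nz, of s \<gamma> x] that
      by (simp add: has_real_derivative_iff_has_vector_derivative has_vector_derivative_at_within)
    show "continuous_on {s0..s1} (\<lambda>s. energy_rate u \<gamma> s x)"
      using nz by (intro continuous_on_hyp_quantities[OF assms(1)] continuous_intros) auto
  qed
  then show ?thesis by simp
qed

lemma weighted_energy_inequality: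
  assumes "C2_reg u" "\<forall>t x. norm x > t - 1 \<longrightarrow> u t x = 0" "0 < s0" "s0 \<le> s1" "0 \<le> \<gamma>"
  shows "(\<integral>x. weighted_energy_density u \<gamma> s1 x \<partial>lborel)
      \<le> (\<integral>x. weighted_energy_density u \<gamma> s0 x \<partial>lborel)
        + (LBINT s=s0..s1. (\<integral>x. wave_source_term u \<gamma> s x \<partial>lborel))"
proof -
  let ?I = "indicator {s0..s1} :: real \<Rightarrow> real"
  have nz: "\<And>s. s \<in> {s0..s1} \<Longrightarrow> s \<noteq> 0" using assms(3) by auto
  have outside: "s1\<^sup>2 < norm x \<Longrightarrow> s \<in> {s0..s1} \<Longrightarrow> s\<^sup>2 < norm x" for s x
    using assms(3) by (auto intro: le_less_trans[OF power_mono])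
  have joint_rate: "integrable (lborel \<Otimes>\<^sub>M lborel) (\<lambda>(s, x). ?I s * energy_rate u \<gamma> s x)"
    using nz hyp_quantities_eq_0(3)[OF assms(2) outside]
    by (intro integrable_slab_compact_support[where R = "s1\<^sup>2"]
        continuous_on_hyp_quantities[OF assms(1)] continuous_intros) auto
  have joint_source: "integrable (lborel \<Otimes>\<^sub>M lborel) (\<lambda>(s, x). ?I s * wave_source_term u \<gamma> s x)"
    using nz hyp_quantities_eq_0(6)[OF assms(2) outside]
    by (intro integrable_slab_compact_support[where R = "s1\<^sup>2"]
        continuous_on_hyp_quantities[OF assms(1)] continuous_intros) auto
  have "(\<integral>x. weighted_energy_density u \<gamma> s1 x \<partial>lborel)
        - (\<integral>x. weighted_energy_density u \<gamma> s0 x \<partial>lborel)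
      = (\<integral>x. (\<integral>s. ?I s * energy_rate u \<gamma> s x \<partial>lborel) \<partial>lborel)"
    using integrable_hyp_quantities(2)[OF assms(1,2)] nz assms(3,4)
    by (simp add: weighted_energy_density_diff_eq_integral[OF assms(1,3,4), symmetric])
  also have "\<dots> = (\<integral>s. (\<integral>x. ?I s * energy_rate u \<gamma> s x \<partial>lborel) \<partial>lborel)"
    by (rule lborel_pair.Fubini_integral[OF joint_rate])
  also have "\<dots> \<le> (\<integral>s. (\<integral>x. ?I s * wave_source_term u \<gamma> s x \<partial>lborel) \<partial>lborel)"
  proof (rule integral_mono)
    show "(\<integral>x. ?I s * energy_rate u \<gamma> s x \<partial>lborel) \<le> (\<integral>x. ?I s * wave_source_term u \<gamma> s x \<partial>lborel)"
      for s
      using integral_energy_rate_le[OF assms(1,2) _ assms(5), of s] assms(3)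
      by (cases "s \<in> {s0..s1}") auto
  qed (use lborel_pair.integrable_fst[OF joint_rate] lborel_pair.integrable_fst[OF joint_source]
       in simp_all)
  also have "\<dots> = (LBINT s=s0..s1. (\<integral>x. wave_source_term u \<gamma> s x \<partial>lborel))"
    by (simp add: interval_integral_Icc[OF assms(4)] set_lebesgue_integral_def)
  finally show ?thesis by simp
qed

section \<open>Comparison with the unweighted energy\<close>

lemma scaled_gradient_le_energy_algebra:
  fixes s t x1 x2 a b1 b2 :: real
  assumes "t \<noteq> 0" "s\<^sup>2 = t\<^sup>2 - x1\<^sup>2 - x2\<^sup>2"
  shows "(s / t)\<^sup>2 * (a\<^sup>2 + b1\<^sup>2 + b2\<^sup>2)
    \<le> 2 * (a\<^sup>2 + b1\<^sup>2 + b2\<^sup>2 + 2 * ((x1 / t) * b1 * a + (x2 / t) * b2 * a))"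
proof -
  have "2 * (a\<^sup>2 + b1\<^sup>2 + b2\<^sup>2 + 2 * ((x1 / t) * b1 * a + (x2 / t) * b2 * a))
        - (s / t)\<^sup>2 * (a\<^sup>2 + b1\<^sup>2 + b2\<^sup>2)
      = ((t * b1 + x1 * a)\<^sup>2 + (t * b2 + x2 * a)\<^sup>2
          + (x1 * b1 + x2 * b2 + t * a)\<^sup>2 + (x1 * b2 - x2 * b1)\<^sup>2) / t\<^sup>2"
    using assms(1) unfolding power_divide assms(2) by (simp add: field_simps power2_eq_square)
  also have "\<dots> \<ge> 0" by simp
  finally show ?thesis by simp
qed

lemma scaled_gradient_le_energy_density:
  assumes "s \<noteq> 0"
  shows "(s / hyp_t s x)\<^sup>2
      * ((on_hyp (pd 0 u) s x)\<^sup>2 + (on_hyp (pd 1 u) s x)\<^sup>2 + (on_hyp (pd 2 u) s x)\<^sup>2)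
    \<le> 2 * energy_density u s x"
proof -
  have "s\<^sup>2 = (hyp_t s x)\<^sup>2 - (fst x)\<^sup>2 - (snd x)\<^sup>2"
    using hyp_t_sq[of s x] by (simp add: norm_Pair[of "fst x" "snd x", simplified])
  with hyp_t_pos[OF assms, of x] show ?thesis
    unfolding energy_density_def Let_def by (intro scaled_gradient_le_energy_algebra) simp_all
qed

lemma energy_density_nonneg: "s \<noteq> 0 \<Longrightarrow> 0 \<le> energy_density u s x"
  using scaled_gradient_le_energy_density[of s x u]
  by (smt (verit) mult_nonneg_nonneg zero_le_power2)

lemma weighted_energy_density_le:
  assumes "\<forall>t x. norm x > t - 1 \<longrightarrow> u t x = 0" "s \<noteq> 0" "0 \<le> \<gamma>"
  shows "weighted_energy_density u \<gamma> s x \<le> energy_density u s x / 2"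
proof (cases "norm x > hyp_t s x - 1")
  case True
  then have "on_hyp (pd i u) s x = 0" for i
    unfolding on_hyp_def using assms(1) by (rule pd_eq_0_outside_cone[rotated])
  then show ?thesis
    by (simp add: weighted_energy_density_def energy_density_def)
next
  case False
  then have "ghost_weight \<gamma> s x \<le> 1 powr (- \<gamma>)"
    unfolding ghost_weight_def using assms(3) by (intro powr_mono2') auto
  moreover have "0 \<le> ghost_weight \<gamma> s x" by (simp add: ghost_weight_def)
  ultimately show ?thesis
    using energy_density_nonneg[OF assms(2), of u x]
    by (simp add: weighted_energy_density_def mult_left_le_one_le)
qed

lemma energy_eq_integral_energy_density: "energy s u = (\<integral>x. energy_density u s x \<partial>lborel)"
  unfolding energy_def energy_density_def on_hyp_def Let_def ..

lemma integral_weighted_energy_le_energy: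
  assumes "C2_reg u" "\<forall>t x. norm x > t - 1 \<longrightarrow> u t x = 0" "s \<noteq> 0" "0 \<le> \<gamma>"
  shows "(\<integral>x. weighted_energy_density u \<gamma> s x \<partial>lborel) \<le> energy s u / 2"
proof -
  have "(\<integral>x. weighted_energy_density u \<gamma> s x \<partial>lborel) \<le> (\<integral>x. energy_density u s x / 2 \<partial>lborel)"
    using integrable_hyp_quantities(1,2)[OF assms(1-3)] weighted_energy_density_le[OF assms(2-4)]
    by (intro integral_mono) auto
  then show ?thesis by (simp add: energy_eq_integral_energy_density)
qed

lemma integral_weighted_gradient_le:
  assumes "C2_reg u" "\<forall>t x. norm x > t - 1 \<longrightarrow> u t x = 0" "s \<noteq> 0"
  shows "(\<integral>x. (let t = hyp_t s x in (t - norm x) powr (-\<gamma>) * (s / t)\<^sup>2 * grad_sq u t x) \<partial>lborel)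
    \<le> 4 * (\<integral>x. weighted_energy_density u \<gamma> s x \<partial>lborel)"
proof -
  define G where "G x = ghost_weight \<gamma> s x * ((s / hyp_t s x)\<^sup>2
      * ((on_hyp (pd 0 u) s x)\<^sup>2 + (on_hyp (pd 1 u) s x)\<^sup>2 + (on_hyp (pd 2 u) s x)\<^sup>2))" for x
  have eq: "(\<lambda>x. let t = hyp_t s x in (t - norm x) powr (-\<gamma>) * (s / t)\<^sup>2 * grad_sq u t x) = G"
    by (simp add: fun_eq_iff G_def ghost_weight_def on_hyp_def grad_sq_eq Let_def mult.assoc)
  have "integrable lborel G"
  proof (rule integrable_continuous_compact_support[of "cball 0 (s\<^sup>2)"])
    have "C1_reg u" using assms(1) by (simp add: C2_reg_def)
    then show "continuous_on (cball 0 (s\<^sup>2)) G"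
      unfolding G_def using assms(3) hyp_t_nonzero[OF assms(3)]
      by (intro continuous_intros continuous_on_ghost_weight continuous_on_on_hyp_pd) auto
    show "G x = 0" if "x \<notin> cball 0 (s\<^sup>2)" for x
      using on_hyp_pd_eq_0[OF assms(2)] that by (simp add: G_def mem_cball_0)
  qed simp
  moreover have "G x \<le> 4 * weighted_energy_density u \<gamma> s x" for x
  proof -
    have "G x \<le> ghost_weight \<gamma> s x * (2 * energy_density u s x)"
      unfolding G_def using scaled_gradient_le_energy_density[OF assms(3)]
      by (intro mult_left_mono) (simp_all add: ghost_weight_def)
    then show ?thesis by (simp add: weighted_energy_density_def mult_ac)
  qed
  ultimately have "(\<integral>x. G x \<partial>lborel) \<le> (\<integral>x. 4 * weighted_energy_density u \<gamma> s x \<partial>lborel)"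
    using integrable_hyp_quantities(2)[OF assms] by (intro integral_mono) auto
  then show ?thesis by (simp add: eq)
qed

lemma integral_wave_source_term_eq:
  assumes "\<forall>t x. norm x > t - 1 \<longrightarrow> u t x = 0"
    and "\<forall>t x. (t, x) \<in> K_region s0 s1 \<longrightarrow> - wave_box u t x = f t x"
    and "0 \<le> s0" "s0 \<le> s" "s \<le> s1"
  shows "(\<integral>x. wave_source_term u \<gamma> s x \<partial>lborel)
    = (\<integral>x. (let t = hyp_t s x in (s / t) * (t - norm x) powr (-\<gamma>) * f t x * pd 0 u t x) \<partial>lborel)"
proof (rule Bochner_Integration.integral_cong[OF refl])
  fix x
  let ?t = "hyp_t s x"
  show "wave_source_term u \<gamma> s x
      = (let t = ?t in (s / t) * (t - norm x) powr (-\<gamma>) * f t x * pd 0 u t x)"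
  proof (cases "norm x \<le> ?t - 1")
    case True
    have "s0\<^sup>2 \<le> s\<^sup>2" "s\<^sup>2 \<le> s1\<^sup>2"
      using assms(3-5) by (auto intro: power_mono)
    with True have "(?t, x) \<in> K_region s0 s1"
      unfolding K_region_def by (simp add: hyp_t_sq)
    with assms(2) have "f ?t x = - wave_box u ?t x" by (metis prod.collapse)
    then have "f ?t x = pd 0 (pd 0 u) ?t x - pd 1 (pd 1 u) ?t x - pd 2 (pd 2 u) ?t x"
      by (simp add: wave_box_def)
    then show ?thesis
      by (simp add: wave_source_term_def ghost_weight_def on_hyp_def Let_def mult_ac)
  next
    case False
    then have "pd 0 u ?t x = 0" using assms(1) by (intro pd_eq_0_outside_cone) auto
    then show ?thesis by (simp add: wave_source_term_def on_hyp_def)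
  qed
qed

theorem proposition3p2:
  fixes u f :: "real \<Rightarrow> real \<times> real \<Rightarrow> real" and \<gamma> s :: real
  assumes "\<gamma> > 0" and "s \<ge> 2"
    and "C2_reg u"
    and "\<forall>t x. norm x > t - 1 \<longrightarrow> u t x = 0"
    and "\<forall>t x. (t, x) \<in> K_region 2 s \<longrightarrow> - wave_box u t x = f t x"
  shows "(\<integral>x. (let t = hyp_t s x in
            (t - norm x) powr (-\<gamma>) * (s / t)\<^sup>2 * grad_sq u t x) \<partial>lborel)
         \<le> 2 * energy 2 u
           + 4 * (LBINT s'=2..s. (\<integral>x. (let t = hyp_t s' x in
                (s' / t) * (t - norm x) powr (-\<gamma>) * f t x * pd 0 u t x) \<partial>lborel))"
proof -
  let ?E = "\<lambda>s. \<integral>x. weighted_energy_density u \<gamma> s x \<partial>lborel"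
  have "s \<noteq> 0" "0 \<le> \<gamma>" using assms(1,2) by auto
  have "(\<integral>x. (let t = hyp_t s x in (t - norm x) powr (-\<gamma>) * (s / t)\<^sup>2 * grad_sq u t x) \<partial>lborel)
      \<le> 4 * ?E s"
    using integral_weighted_gradient_le[OF assms(3,4) \<open>s \<noteq> 0\<close>] .
  moreover have "?E s \<le> ?E 2 + (LBINT s'=2..s. (\<integral>x. wave_source_term u \<gamma> s' x \<partial>lborel))"
    using weighted_energy_inequality[OF assms(3,4) _ assms(2) \<open>0 \<le> \<gamma>\<close>] by simp
  moreover have "?E 2 \<le> energy 2 u / 2"
    using integral_weighted_energy_le_energy[OF assms(3,4) _ \<open>0 \<le> \<gamma>\<close>] by simp
  moreover have "(LBINT s'=2..s. (\<integral>x. wave_source_term u \<gamma> s' x \<partial>lborel))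
      = (LBINT s'=2..s. (\<integral>x. (let t = hyp_t s' x in
          (s' / t) * (t - norm x) powr (-\<gamma>) * f t x * pd 0 u t x) \<partial>lborel))"
    using assms(2) integral_wave_source_term_eq[OF assms(4,5)]
    by (intro interval_integral_cong) (auto simp: einterval_iff)
  ultimately show ?thesis by linarith
qed

end
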